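(* Let $X,X',Y,Y'$ be nonnegative bivariate random vectors with absolutely continuous joint distribution functions $F,F',G,G'$, respectively, where for $i=1,2$, $Y_i=a_iX_i+c_i$ and $Y_i'=a_iX_i'+d_i$ with $a_i>0$ and $d_i\ge c_i>0$. Suppose $X\le_{CDCPE}X'$ and that either $\overline\varepsilon^*_i(X;t_1,t_2)$ (for $i=1,2$) or $\overline\varepsilon^*_i(X';t_1,t_2)$ (for $i=1,2$) is increasing in $t_1$ and increasing in $t_2$. Then $Y\le_{CDCPE}Y'$, i.e. $\overline\varepsilon^*_i(Y;t_1,t_2)\ge\overline\varepsilon^*_i(Y';t_1,t_2)$ for $i=1,2$ and all $t_1\ge d_1$, $t_2\ge d_2$ where defined.
   Context: For a nonnegative random vector $X$ with joint distribution function $F(x_1,x_2)=P(X_1\le x_1,X_2\le x_2)$ and $t_1,t_2>0$ with $F(t_1,t_2)>0$, the conditional dynamic cumulative past entropies (CDCPE) are $$\overline\varepsilon^*_1(X;t_1,t_2)=-\int_0^{t_1}\frac{F(x_1,t_2)}{F(t_1,t_2)}\log\frac{F(x_1,t_2)}{F(t_1,t_2)}dx_1,\qquad \overline\varepsilon^*_2(X;t_1,t_2)=-\int_0^{t_2}\frac{F(t_1,x_2)}{F(t_1,t_2)}\log\frac{F(t_1,x_2)}{F(t_1,t_2)}dx_2,$$ with $0\log0=0$. For nonnegative bivariate random vectors $X,Y$, we write $X\geq_{CDCPE}Y$ (equivalently $Y\le_{CDCPE}X$) if $\overline\varepsilon^*_i(X;t_1,t_2)\le\overline\varepsilon^*_i(Y;t_1,t_2)$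 for all $t_1,t_2\ge0$ (where defined) and $i=1,2$. *)

theory Defs
  imports "HOL-Probability.Probability"
begin

definition jdf :: "'a measure \<Rightarrow> ('a \<Rightarrow> real) \<Rightarrow> ('a \<Rightarrow> real) \<Rightarrow> real \<Rightarrow> real \<Rightarrow> real" where
  "jdf M X1 X2 x1 x2 = measure M {\<omega> \<in> space M. X1 \<omega> \<le> x1 \<and> X2 \<omega> \<le> x2}"

definition plogp :: "real \<Rightarrow> real" where
  "plogp u = (if u = 0 then 0 else u * ln u)"

definition cdcpe1 :: "(real \<Rightarrow> real \<Rightarrow> real) \<Rightarrow> real \<Rightarrow> real \<Rightarrow> real" where
  "cdcpe1 F t1 t2 = - integral {0..t1} (\<lambda>x1. plogp (F x1 t2 / F t1 t2))"

definition cdcpe2 :: "(real \<Rightarrow> real \<Rightarrow> real) \<Rightarrow> real \<Rightarrow> real \<Rightarrow> real" where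
  "cdcpe2 F t1 t2 = - integral {0..t2} (\<lambda>x2. plogp (F t1 x2 / F t1 t2))"

definition cdcpe_defined :: "(real \<Rightarrow> real \<Rightarrow> real) \<Rightarrow> real \<Rightarrow> real \<Rightarrow> bool" where
  "cdcpe_defined F t1 t2 \<longleftrightarrow> t1 > 0 \<and> t2 > 0 \<and> F t1 t2 > 0"

definition cdcpe_le :: "(real \<Rightarrow> real \<Rightarrow> real) \<Rightarrow> (real \<Rightarrow> real \<Rightarrow> real) \<Rightarrow> bool" where
  "cdcpe_le F F' \<longleftrightarrow> (\<forall>t1 t2. cdcpe_defined F t1 t2 \<longrightarrow> cdcpe_defined F' t1 t2 \<longrightarrow>
      cdcpe1 F' t1 t2 \<le> cdcpe1 F t1 t2 \<and> cdcpe2 F' t1 t2 \<le> cdcpe2 F t1 t2)"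

definition cdcpe_increasing :: "(real \<Rightarrow> real \<Rightarrow> real) \<Rightarrow> bool" where
  "cdcpe_increasing F \<longleftrightarrow>
     (\<forall>t1 t1' t2. t1 \<le> t1' \<longrightarrow> cdcpe_defined F t1 t2 \<longrightarrow> cdcpe_defined F t1' t2 \<longrightarrow>
        cdcpe1 F t1 t2 \<le> cdcpe1 F t1' t2 \<and> cdcpe2 F t1 t2 \<le> cdcpe2 F t1' t2) \<and>
     (\<forall>t1 t2 t2'. t2 \<le> t2' \<longrightarrow> cdcpe_defined F t1 t2 \<longrightarrow> cdcpe_defined F t1 t2' \<longrightarrow>
        cdcpe1 F t1 t2 \<le> cdcpe1 F t1 t2' \<and> cdcpe2 F t1 t2 \<le> cdcpe2 F t1 t2')"

end

theory Submission
  imports Defs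
begin

text \<open>
  The affine maps rescale the entropies: the \<open>i\<close>-th CDCPE of \<open>Y\<close> at \<open>(t1, t2)\<close> is \<open>a\<^sub>i\<close>
  times that of \<open>X\<close> at \<open>s = ((t1 - c1) / a1, (t2 - c2) / a2)\<close>, and the same holds for \<open>Y'\<close>
  and \<open>X'\<close> at \<open>r = ((t1 - d1) / a1, (t2 - d2) / a2) \<le> s\<close>. So it suffices to bound the
  entropies of \<open>X'\<close> at \<open>r\<close> by those of \<open>X\<close> at \<open>s\<close>, chaining \<open>X \<le>\<^sub>C\<^sub>D\<^sub>C\<^sub>P\<^sub>E X'\<close> with
  the monotonicity in \<open>(t1, t2)\<close> through \<open>s\<close> (if the entropies of \<open>X'\<close> increase) or through
  \<open>r\<close> (if those of \<open>X\<close> do).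

  The route through \<open>r\<close> needs the entropies of \<open>X\<close> to be defined at \<open>r\<close>, i.e. \<open>F(r) > 0\<close>.
  If \<open>F(r) = 0 < F(s)\<close>, then along a coordinate section through \<open>r\<close> the entropy of \<open>X\<close> just
  past the start of its support is arbitrarily small, while that of \<open>X'\<close>, whose distribution
  function is continuous and already positive there, stays bounded away from \<open>0\<close>; this
  contradicts \<open>X \<le>\<^sub>C\<^sub>D\<^sub>C\<^sub>P\<^sub>E X'\<close>.
\<close>

lemma plogp_nonpos: "0 \<le> r \<Longrightarrow> r \<le> 1 \<Longrightarrow> plogp r \<le> 0"
  by (auto simp: plogp_def mult_nonneg_nonpos)

lemma plogp_ge_minus_one:
  assumes "0 \<le> r" shows "-1 \<le> plogp r"
proof (cases "r = 0")
  case False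
  with assms have "0 < r" by simp
  have "- ln r \<le> 1/r - 1"
    using ln_le_minus_one[of "1/r"] \<open>0 < r\<close> by (simp add: ln_div)
  then have "r * - ln r \<le> r * (1/r - 1)"
    using \<open>0 < r\<close> by (intro mult_left_mono) auto
  then show ?thesis using \<open>0 < r\<close> by (simp add: plogp_def algebra_simps)
qed (simp add: plogp_def)

lemma plogp_le_square: "0 \<le> r \<Longrightarrow> plogp r \<le> r^2"
  using ln_le_minus_one[of r] mult_left_mono[of "ln r" "r - 1" r]
  by (auto simp: plogp_def power2_eq_square algebra_simps)

lemma abs_plogp_le: "0 \<le> r \<Longrightarrow> \<bar>plogp r\<bar> \<le> 1 + r^2"
  using plogp_ge_minus_one[of r] plogp_le_square[of r] zero_le_power2[of r]
  unfolding abs_le_iff by linarith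

lemma plogp_le_neg:
  assumes "0 < q" "q \<le> r" "r \<le> 1/2"
  shows "plogp r \<le> - q * ln 2"
proof -
  have "0 < r" using assms by simp
  have "ln r \<le> - ln 2"
    using ln_le_cancel_iff[of r "1/2"] \<open>0 < r\<close> assms(3) by (simp add: ln_div)
  then have "r * ln r \<le> r * - ln 2"
    using \<open>0 < r\<close> by (intro mult_left_mono) auto
  also have "\<dots> \<le> q * - ln 2"
    using assms by (intro mult_right_mono_neg) auto
  finally show ?thesis using \<open>0 < r\<close> by (simp add: plogp_def)
qed

lemma borel_measurable_plogp [measurable]: "plogp \<in> borel_measurable borel"
  unfolding plogp_def by measurable

lemma integrable_on_plogp_mono:
  fixes g :: "real \<Rightarrow> real"
  assumes "mono g" "\<And>x. 0 \<le> g x" "0 \<le> K"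
  shows "(\<lambda>x. plogp (g x / K)) integrable_on {a..b}"
proof (rule measurable_bounded_by_integrable_imp_integrable)
  have "(\<lambda>x. plogp (g x / K)) \<in> borel_measurable borel"
    using borel_measurable_mono[OF assms(1)] by measurable
  then have "(\<lambda>x. plogp (g x / K)) \<circ> id \<in> borel_measurable lebesgue"
    by (rule measurable_comp[OF id_borel_measurable_lebesgue])
  then show "(\<lambda>x. plogp (g x / K)) \<in> borel_measurable (lebesgue_on {a..b})"
    by (intro measurable_restrict_space1) (simp add: o_def)
  show "(\<lambda>x. 1 + (g b / K)^2) integrable_on {a..b}" by (rule integrable_const_ivl)
  show "{a..b} \<in> sets lebesgue" by simp
  fix x assume "x \<in> {a..b}"
  then have "\<bar>plogp (g x / K)\<bar> \<le> 1 + (g x / K)^2" "(g x / K)^2 \<le> (g b / K)^2"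
    using assms by (auto intro!: abs_plogp_le power_mono divide_right_mono simp: mono_def)
  then show "norm (plogp (g x / K)) \<le> 1 + (g b / K)^2" by simp
qed

definition cpe :: "(real \<Rightarrow> real) \<Rightarrow> real \<Rightarrow> real" where
  "cpe f t = - integral {0..t} (\<lambda>x. plogp (f x / f t))"

lemma cdcpe1_eq_cpe: "cdcpe1 F t1 t2 = cpe (\<lambda>x. F x t2) t1"
  by (simp add: cdcpe1_def cpe_def)

lemma cdcpe2_eq_cpe: "cdcpe2 F t1 t2 = cpe (F t1) t2"
  by (simp add: cdcpe2_def cpe_def)

lemma cpe_le_of_vanishing_below:
  assumes f: "mono f" "\<And>x. 0 \<le> f x" "0 < f t"
    and m: "0 \<le> m" "m \<le> t" "\<And>x. x < m \<Longrightarrow> f x = 0"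
  shows "cpe f t \<le> t - m"
proof -
  let ?h = "\<lambda>x. plogp (f x / f t)"
  have int: "?h integrable_on {a..b}" for a b
    using f by (intro integrable_on_plogp_mono) auto
  have "integral {0..m} ?h = integral {0..m} (\<lambda>_. 0)"
    by (rule integral_spike[of "{m}"]) (auto simp: m(3) plogp_def)
  moreover have "integral {m..t} (\<lambda>_. -1) \<le> integral {m..t} ?h"
    using f by (intro integral_le int) (auto intro!: plogp_ge_minus_one)
  moreover have "integral {0..t} ?h = integral {0..m} ?h + integral {m..t} ?h"
    using m int by (simp add: Henstock_Kurzweil_Integration.integral_combine)
  ultimately show ?thesis using m by (simp add: cpe_def)
qed

lemma cpe_ge_of_ratio_bounds:
  assumes g: "mono g" "\<And>x. 0 \<le> g x" "0 < g t"
    and ab: "0 \<le> \<alpha>" "\<alpha> \<le> \<beta>" "\<beta> \<le> t"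
    and q: "0 < q" "\<And>x. x \<in> {\<alpha>..\<beta>} \<Longrightarrow> q \<le> g x / g t \<and> g x / g t \<le> 1/2"
  shows "(\<beta> - \<alpha>) * q * ln 2 \<le> cpe g t"
proof -
  let ?h = "\<lambda>x. plogp (g x / g t)"
  have int: "?h integrable_on {a..b}" for a b
    using g by (intro integrable_on_plogp_mono) auto
  have nonpos: "?h x \<le> 0" if "x \<le> t" for x
    using g that by (intro plogp_nonpos) (auto simp: mono_def)
  have "integral {0..\<alpha>} ?h \<le> integral {0..\<alpha>} (\<lambda>_. 0)"
    using ab by (intro integral_le int nonpos) auto
  moreover have "integral {\<beta>..t} ?h \<le> integral {\<beta>..t} (\<lambda>_. 0)"
    by (intro integral_le int nonpos) auto
  moreover have "integral {\<alpha>..\<beta>} ?h \<le> integral {\<alpha>..\<beta>} (\<lambda>_. - q * ln 2)"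
    using q by (intro integral_le int plogp_le_neg) auto
  moreover have "integral {0..\<alpha>} ?h + integral {\<alpha>..t} ?h = integral {0..t} ?h"
    using ab by (intro Henstock_Kurzweil_Integration.integral_combine int) auto
  moreover have "integral {\<alpha>..\<beta>} ?h + integral {\<beta>..t} ?h = integral {\<alpha>..t} ?h"
    using ab by (intro Henstock_Kurzweil_Integration.integral_combine int) auto
  ultimately show ?thesis using ab by (simp add: cpe_def algebra_simps)
qed

lemma cpe_affine:
  assumes f: "mono f" "\<And>x. 0 \<le> f x" "\<And>x. x < 0 \<Longrightarrow> f x = 0"
    and "0 < a" "0 \<le> c" "c \<le> t"
  shows "cpe (\<lambda>x. f ((x - c) / a)) t = a * cpe f ((t - c) / a)"
proof -
  define s where "s = (t - c) / a"
  define h where "h = (\<lambda>u. plogp (f u / f s))"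
  have "0 \<le> s" "- c / a \<le> 0" using assms by (simp_all add: s_def)
  have "h integrable_on {-c/a..s}"
    unfolding h_def using f by (intro integrable_on_plogp_mono) auto
  then have "(h has_integral integral {-c/a..s} h) (cbox (-c/a) s)"
    by (simp add: integrable_integral)
  from has_integral_affinity'[OF this \<open>0 < a\<close>[THEN positive_imp_inverse_positive], of "-c/a"]
  have "((\<lambda>x. h (x / a - c / a)) has_integral a * integral {-c/a..s} h) {0..t}"
    using assms by (simp add: s_def field_simps)
  then have "integral {0..t} (\<lambda>x. h ((x - c) / a)) = a * integral {-c/a..s} h"
    by (simp add: integral_unique diff_divide_distrib)
  moreover have "integral {-c/a..0} h + integral {0..s} h = integral {-c/a..s} h"
    using \<open>- c / a \<le> 0\<close> \<open>0 \<le> s\<close> \<open>h integrable_on {-c/a..s}\<close>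
    by (rule Henstock_Kurzweil_Integration.integral_combine)
  moreover have "integral {-c/a..0} h = integral {-c/a..0} (\<lambda>_. 0)"
    by (rule integral_spike[of "{0}"]) (auto simp: h_def f(3) plogp_def)
  ultimately have "integral {0..t} (\<lambda>x. h ((x - c) / a)) = a * integral {0..s} h"
    by simp
  then show ?thesis by (simp add: cpe_def h_def s_def)
qed

lemma mono_support_start:
  fixes f :: "real \<Rightarrow> real"
  assumes "mono f" "\<And>x. 0 \<le> f x" "f w = 0" "0 < f T"
  obtains m where "w \<le> m" "\<And>x. x < m \<Longrightarrow> f x = 0" "\<And>x. m < x \<Longrightarrow> 0 < f x"
proof
  let ?S = "{x. 0 < f x}"
  have lower: "w \<le> x" if "x \<in> ?S" for x
    using that assms monoD[OF \<open>mono f\<close>, of x w] by force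
  then have "bdd_below ?S" by (auto simp: bdd_below_def)
  have "T \<in> ?S" using assms by simp
  then show "w \<le> Inf ?S" using lower by (intro cInf_greatest) auto
  show "f x = 0" if "x < Inf ?S" for x
    using that cInf_lower[OF _ \<open>bdd_below ?S\<close>, of x] assms(2)[of x] by force
  show "0 < f x" if "Inf ?S < x" for x
  proof -
    obtain y where "0 < f y" "y < x"
      using cInf_less_iff[OF _ \<open>bdd_below ?S\<close>] \<open>T \<in> ?S\<close> \<open>Inf ?S < x\<close> by auto
    then show ?thesis using monoD[OF \<open>mono f\<close>, of y x] by simp
  qed
qed

lemma cpe_bounded_away_from_0:
  assumes g: "mono g" "\<And>x. 0 \<le> g x" "\<And>x. g x \<le> 1" "continuous_on UNIV g" "g 0 = 0" "0 < g w"
  obtains \<kappa> where "0 < \<kappa>" "\<And>t. w \<le> t \<Longrightarrow> \<kappa> \<le> cpe g t"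
proof -
  define p where "p = g w"
  have "0 < p" using g(6) by (simp add: p_def)
  have "0 < w" using g monoD[OF \<open>mono g\<close>, of w 0] by force
  have cont: "continuous_on {0..w} g" using g(4) continuous_on_subset by blast
  obtain \<alpha> where \<alpha>: "0 \<le> \<alpha>" "\<alpha> \<le> w" "g \<alpha> = p/4"
    using IVT'[of g 0 "p/4" w] cont g(5) \<open>0 < p\<close> \<open>0 < w\<close> by (auto simp: p_def)
  obtain \<beta> where \<beta>: "0 \<le> \<beta>" "\<beta> \<le> w" "g \<beta> = p/2"
    using IVT'[of g 0 "p/2" w] cont g(5) \<open>0 < p\<close> \<open>0 < w\<close> by (auto simp: p_def)
  have "\<alpha> < \<beta>"
    using monoD[OF \<open>mono g\<close>, of \<beta> \<alpha>] \<alpha> \<beta> \<open>0 < p\<close> by force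
  then have "0 < (\<beta> - \<alpha>) * (p/4) * ln 2" using \<open>0 < p\<close> by simp
  moreover have "(\<beta> - \<alpha>) * (p/4) * ln 2 \<le> cpe g t" if "w \<le> t" for t
  proof -
    have "p \<le> g t" using that monoD[OF \<open>mono g\<close>] by (simp add: p_def)
    show ?thesis
    proof (rule cpe_ge_of_ratio_bounds)
      fix x assume "x \<in> {\<alpha>..\<beta>}"
      then have "p/4 \<le> g x" "g x \<le> p/2"
        using monoD[OF \<open>mono g\<close>, of \<alpha> x] monoD[OF \<open>mono g\<close>, of x \<beta>] \<alpha> \<beta> by auto
      moreover have "g x \<le> g x / g t"
        using \<open>0 < p\<close> \<open>p \<le> g t\<close> g(2,3) by (simp add: le_divide_eq mult_left_le)
      moreover have "g x / g t \<le> 1/2"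
        using \<open>g x \<le> p/2\<close> \<open>0 < p\<close> \<open>p \<le> g t\<close> by (simp add: divide_le_eq)
      ultimately show "p/4 \<le> g x / g t \<and> g x / g t \<le> 1/2" by linarith
    qed (use g \<alpha> \<beta> \<open>\<alpha> < \<beta>\<close> \<open>0 < p\<close> \<open>p \<le> g t\<close> that in auto)
  qed
  ultimately show ?thesis by (rule that)
qed

text \<open>Just past the start \<open>m\<close> of the support of \<open>f\<close>, \<open>cpe f\<close> is at most the distance to \<open>m\<close>,
  whereas \<open>cpe g\<close> stays above a fixed positive constant.\<close>

lemma cpe_less_at_support_start:
  assumes f: "mono f" "\<And>x. 0 \<le> f x" "f w = 0" "0 < f T"
    and g: "mono g" "\<And>x. 0 \<le> g x" "\<And>x. g x \<le> 1" "continuous_on UNIV g" "g 0 = 0" "0 < g w"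
  obtains t where "0 < t" "0 < f t" "0 < g t" "cpe f t < cpe g t"
proof -
  obtain m where m: "w \<le> m" "\<And>x. x < m \<Longrightarrow> f x = 0" "\<And>x. m < x \<Longrightarrow> 0 < f x"
    using mono_support_start[OF f] by blast
  obtain \<kappa> where \<kappa>: "0 < \<kappa>" "\<And>t. w \<le> t \<Longrightarrow> \<kappa> \<le> cpe g t"
    using cpe_bounded_away_from_0[OF g] by blast
  define t where "t = m + \<kappa>/2"
  have "0 < w" using g monoD[OF \<open>mono g\<close>, of w 0] by force
  have "m < t" "w \<le> t" "0 < t" using \<kappa>(1) m(1) \<open>0 < w\<close> by (simp_all add: t_def)
  have "0 < f t" using m(3) \<open>m < t\<close> .
  have "0 < g t" using g(6) monoD[OF \<open>mono g\<close> \<open>w \<le> t\<close>] by simp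
  have "cpe f t \<le> t - m"
    using f(1,2) \<open>0 < f t\<close> \<open>0 < w\<close> m \<open>m < t\<close> by (intro cpe_le_of_vanishing_below) auto
  also have "\<dots> < \<kappa>" using \<kappa>(1) by (simp add: t_def)
  also have "\<dots> \<le> cpe g t" using \<kappa>(2) \<open>w \<le> t\<close> .
  finally show ?thesis using that \<open>0 < t\<close> \<open>0 < f t\<close> \<open>0 < g t\<close> by blast
qed

definition monotone_df :: "(real \<Rightarrow> real \<Rightarrow> real) \<Rightarrow> bool" where
  "monotone_df F \<longleftrightarrow> (\<forall>x y. 0 \<le> F x y \<and> F x y \<le> 1) \<and>
     (\<forall>x x' y y'. x \<le> x' \<longrightarrow> y \<le> y' \<longrightarrow> F x y \<le> F x' y')"

text \<open>The distribution function of a random vector with positive components and atomless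
  marginals.\<close>

definition pos_continuous_df :: "(real \<Rightarrow> real \<Rightarrow> real) \<Rightarrow> bool" where
  "pos_continuous_df F \<longleftrightarrow> monotone_df F \<and> (\<forall>x. F x 0 = 0 \<and> F 0 x = 0) \<and>
     (\<forall>x. continuous_on UNIV (F x) \<and> continuous_on UNIV (\<lambda>y. F y x))"

lemma monotone_dfD:
  assumes "monotone_df F"
  shows "0 \<le> F x y" "F x y \<le> 1" "x \<le> x' \<Longrightarrow> y \<le> y' \<Longrightarrow> F x y \<le> F x' y'"
    and "mono (F x)" "mono (\<lambda>x. F x y)"
  using assms by (auto simp: monotone_df_def mono_def)

lemma cdcpe_le_imp_pos:
  assumes F: "monotone_df F" and G: "pos_continuous_df G" and le: "cdcpe_le F G"
    and u: "0 < u1" "0 < u2" "u1 \<le> v1" "u2 \<le> v2"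
    and pos: "0 < G u1 u2" "0 < F v1 v2"
  shows "0 < F u1 u2"
proof (rule ccontr)
  assume "\<not> 0 < F u1 u2"
  then have F0: "F u1 u2 = 0" using monotone_dfD(1)[OF F, of u1 u2] by simp
  have G': "monotone_df G" "\<And>x. G x 0 = 0" "\<And>y. G 0 y = 0"
    "continuous_on UNIV (G u1)" "continuous_on UNIV (\<lambda>x. G x v2)"
    using G by (auto simp: pos_continuous_df_def)
  show False
  proof (cases "0 < F u1 v2")
    case True
    obtain t where t: "0 < t" "0 < F u1 t" "0 < G u1 t" "cpe (F u1) t < cpe (G u1) t"
      by (rule cpe_less_at_support_start[of "F u1" u2 v2 "G u1"])
        (use F0 True pos G' monotone_dfD[OF F] monotone_dfD[OF G'(1)] in auto)
    have "cdcpe2 G u1 t \<le> cdcpe2 F u1 t"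
      using le t u unfolding cdcpe_le_def cdcpe_defined_def by auto
    with t show False by (simp add: cdcpe2_eq_cpe)
  next
    case False
    then have "F u1 v2 = 0" using monotone_dfD(1)[OF F, of u1 v2] by simp
    have "0 < G u1 v2" using pos monotone_dfD(3)[OF G'(1), of u1 u1 u2 v2] u by simp
    obtain t where t: "0 < t" "0 < F t v2" "0 < G t v2"
      "cpe (\<lambda>x. F x v2) t < cpe (\<lambda>x. G x v2) t"
      by (rule cpe_less_at_support_start[of "\<lambda>x. F x v2" u1 v1 "\<lambda>x. G x v2"])
        (use \<open>F u1 v2 = 0\<close> \<open>0 < G u1 v2\<close> pos G' monotone_dfD[OF F] monotone_dfD[OF G'(1)] in auto)
    have "cdcpe1 G t v2 \<le> cdcpe1 F t v2"
      using le t u unfolding cdcpe_le_def cdcpe_defined_def by auto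
    with t show False by (simp add: cdcpe1_eq_cpe)
  qed
qed

lemma cdcpe_increasing_mono:
  assumes "cdcpe_increasing F" "monotone_df F" "cdcpe_defined F r1 r2" "r1 \<le> s1" "r2 \<le> s2"
  shows "cdcpe1 F r1 r2 \<le> cdcpe1 F s1 s2 \<and> cdcpe2 F r1 r2 \<le> cdcpe2 F s1 s2"
proof -
  have "cdcpe_defined F s1 r2" "cdcpe_defined F s1 s2"
    using assms(3-5) monotone_dfD(3)[OF assms(2), of r1 s1 r2 r2]
      monotone_dfD(3)[OF assms(2), of r1 s1 r2 s2]
    by (auto simp: cdcpe_defined_def)
  with assms show ?thesis unfolding cdcpe_increasing_def by (meson order_trans)
qed

lemma cdcpe_le_at_dominated_points:
  assumes F: "monotone_df F" and F': "pos_continuous_df F'" and le: "cdcpe_le F F'"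
    and inc: "cdcpe_increasing F \<or> cdcpe_increasing F'"
    and rs: "0 \<le> r1" "r1 \<le> s1" "0 \<le> r2" "r2 \<le> s2"
    and pos: "0 < F s1 s2" "0 < F' r1 r2"
  shows "cdcpe1 F' r1 r2 \<le> cdcpe1 F s1 s2 \<and> cdcpe2 F' r1 r2 \<le> cdcpe2 F s1 s2"
proof -
  have "monotone_df F'" using F' by (simp add: pos_continuous_df_def)
  have "0 < r1" "0 < r2"
    using pos(2) rs F' by (auto simp: pos_continuous_df_def le_less)
  then have defF': "cdcpe_defined F' r1 r2" using pos by (simp add: cdcpe_defined_def)
  show ?thesis
    using inc
  proof
    assume "cdcpe_increasing F"
    have "0 < F r1 r2"
      using cdcpe_le_imp_pos[OF F F' le \<open>0 < r1\<close> \<open>0 < r2\<close> rs(2,4) pos(2,1)] .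
    then have "cdcpe_defined F r1 r2" using \<open>0 < r1\<close> \<open>0 < r2\<close> by (simp add: cdcpe_defined_def)
    with le defF' cdcpe_increasing_mono[OF \<open>cdcpe_increasing F\<close> F _ rs(2,4)]
    show ?thesis unfolding cdcpe_le_def by (meson order_trans)
  next
    assume "cdcpe_increasing F'"
    have "cdcpe_defined F s1 s2" "cdcpe_defined F' s1 s2"
      using \<open>0 < r1\<close> \<open>0 < r2\<close> rs pos monotone_dfD(3)[OF \<open>monotone_df F'\<close> rs(2,4)]
      by (auto simp: cdcpe_defined_def)
    with le cdcpe_increasing_mono[OF \<open>cdcpe_increasing F'\<close> \<open>monotone_df F'\<close> defF' rs(2,4)]
    show ?thesis unfolding cdcpe_le_def by (meson order_trans)
  qed
qed

lemma jdf_swap: "jdf M X1 X2 x y = jdf M X2 X1 y x"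
  by (simp add: jdf_def conj_commute)

lemma jdf_affine:
  assumes "0 < a1" "0 < a2"
  shows "jdf M (\<lambda>\<omega>. a1 * X1 \<omega> + c1) (\<lambda>\<omega>. a2 * X2 \<omega> + c2)
       = (\<lambda>t1 t2. jdf M X1 X2 ((t1 - c1) / a1) ((t2 - c2) / a2))"
proof (intro ext)
  fix t1 t2
  have "a1 * x + c1 \<le> t1 \<longleftrightarrow> x \<le> (t1 - c1) / a1" "a2 * x + c2 \<le> t2 \<longleftrightarrow> x \<le> (t2 - c2) / a2"
    for x using assms by (simp_all add: pos_le_divide_eq algebra_simps)
  then show "jdf M (\<lambda>\<omega>. a1 * X1 \<omega> + c1) (\<lambda>\<omega>. a2 * X2 \<omega> + c2) t1 t2
      = jdf M X1 X2 ((t1 - c1) / a1) ((t2 - c2) / a2)"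
    by (simp add: jdf_def)
qed

lemma jdf_monotone_df:
  assumes "prob_space M" "X1 \<in> borel_measurable M" "X2 \<in> borel_measurable M"
  shows "monotone_df (jdf M X1 X2)"
proof -
  interpret prob_space M by fact
  have "jdf M X1 X2 x y \<le> jdf M X1 X2 x' y'" if "x \<le> x'" "y \<le> y'" for x x' y y'
  proof -
    have "{\<omega> \<in> space M. X1 \<omega> \<le> x' \<and> X2 \<omega> \<le> y'} \<in> events"
      using assms(2,3) by measurable
    then show ?thesis
      unfolding jdf_def using that by (intro finite_measure_mono) auto
  qed
  then show ?thesis by (simp add: monotone_df_def jdf_def)
qed

lemma jdf_eq_0_of_neg:
  assumes "\<forall>\<omega>\<in>space M. 0 \<le> X1 \<omega> \<and> 0 \<le> X2 \<omega>" "x < 0 \<or> y < 0"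
  shows "jdf M X1 X2 x y = 0"
proof -
  have "{\<omega> \<in> space M. X1 \<omega> \<le> x \<and> X2 \<omega> \<le> y} = {}" using assms by force
  then show ?thesis unfolding jdf_def by (metis measure_empty)
qed

lemma measure_preimage_null_of_absolutely_continuous:
  assumes "absolutely_continuous lborel (distr M lborel X)" "X \<in> borel_measurable M"
    and "A \<in> null_sets lborel"
  shows "measure M (X -` A \<inter> space M) = 0"
proof -
  have "A \<in> null_sets (distr M lborel X)"
    using assms(1,3) by (auto simp: absolutely_continuous_def)
  then show ?thesis
    using emeasure_distr[of X M lborel A] assms(2) by (simp add: null_sets_def measure_def)
qed

lemma measure_component_eq_0_of_absolutely_continuous:
  fixes X1 X2 :: "'a \<Rightarrow> real"
  assumes "absolutely_continuous lborel (distr M lborel (\<lambda>\<omega>. (X1 \<omega>, X2 \<omega>)))"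
    and "X1 \<in> borel_measurable M" "X2 \<in> borel_measurable M"
  shows "measure M {\<omega>\<in>space M. X1 \<omega> = x} = 0" "measure M {\<omega>\<in>space M. X2 \<omega> = x} = 0"
proof -
  have "{x} \<times> UNIV \<in> null_sets (lborel :: (real \<times> real) measure)"
    "UNIV \<times> {x} \<in> null_sets (lborel :: (real \<times> real) measure)"
    unfolding lborel_prod[symmetric]
    by (auto simp: null_sets_def lborel.emeasure_pair_measure_Times)
  moreover have "(\<lambda>\<omega>. (X1 \<omega>, X2 \<omega>)) \<in> borel_measurable M" using assms(2,3) by measurable
  ultimately have "measure M ((\<lambda>\<omega>. (X1 \<omega>, X2 \<omega>)) -` ({x} \<times> UNIV) \<inter> space M) = 0"
    "measure M ((\<lambda>\<omega>. (X1 \<omega>, X2 \<omega>)) -` (UNIV \<times> {x}) \<inter> space M) = 0"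
    using assms(1) by (auto intro: measure_preimage_null_of_absolutely_continuous)
  moreover have "(\<lambda>\<omega>. (X1 \<omega>, X2 \<omega>)) -` ({x} \<times> UNIV) \<inter> space M = {\<omega>\<in>space M. X1 \<omega> = x}"
    "(\<lambda>\<omega>. (X1 \<omega>, X2 \<omega>)) -` (UNIV \<times> {x}) \<inter> space M = {\<omega>\<in>space M. X2 \<omega> = x}"
    by auto
  ultimately show "measure M {\<omega>\<in>space M. X1 \<omega> = x} = 0" "measure M {\<omega>\<in>space M. X2 \<omega> = x} = 0"
    by simp_all
qed

lemma isCont_jdf:
  assumes "prob_space M" "X1 \<in> borel_measurable M" "X2 \<in> borel_measurable M"
    and atomless: "\<And>y. measure M {\<omega>\<in>space M. X2 \<omega> = y} = 0"
  shows "isCont (jdf M X1 X2 w) x"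
proof -
  interpret prob_space M by fact
  \<comment> \<open>Near \<open>x\<close> the section is the cdf of the variable \<open>f\<close>, whose atoms are those of \<open>X2\<close>.\<close>
  define f where "f \<omega> = (if X1 \<omega> \<le> w then X2 \<omega> else x + 1)" for \<omega>
  have f: "f \<in> borel_measurable M" unfolding f_def using assms(2,3) by measurable
  define \<nu> where "\<nu> = distr M borel f"
  interpret \<nu>: real_distribution \<nu>
    using prob_space_distr[OF f]
    by (simp add: real_distribution_def real_distribution_axioms_def \<nu>_def)
  have "cdf \<nu> y = jdf M X1 X2 w y" if "y < x + 1" for y
  proof -
    have "f -` {..y} \<inter> space M = {\<omega> \<in> space M. X1 \<omega> \<le> w \<and> X2 \<omega> \<le> y}"
      using that by (auto simp: f_def split: if_splits)
    then show ?thesis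
      using measure_distr[OF f, of "{..y}"] by (simp add: cdf_def \<nu>_def jdf_def)
  qed
  then have "eventually (\<lambda>y. cdf \<nu> y = jdf M X1 X2 w y) (nhds x)"
    using eventually_nhds_in_open[of "{..<x + 1}" x] by (auto elim!: eventually_mono)
  moreover have "measure \<nu> {x} = measure M (f -` {x} \<inter> space M)"
    unfolding \<nu>_def by (rule measure_distr[OF f]) simp
  moreover have "measure M (f -` {x} \<inter> space M) \<le> measure M {\<omega>\<in>space M. X2 \<omega> = x}"
    using assms(3) by (intro finite_measure_mono) (auto simp: f_def split: if_splits)
  ultimately show ?thesis
    using atomless[of x] \<nu>.isCont_cdf[of x] isCont_cong[of "cdf \<nu>" "jdf M X1 X2 w" x]
    by (simp add: antisym measure_nonneg)
qed

lemma jdf_at_0: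
  assumes "prob_space M" "X2 \<in> borel_measurable M" "\<forall>\<omega>\<in>space M. 0 \<le> X2 \<omega>"
    and "measure M {\<omega>\<in>space M. X2 \<omega> = 0} = 0"
  shows "jdf M X1 X2 w 0 = 0"
proof -
  interpret prob_space M by fact
  have "jdf M X1 X2 w 0 \<le> measure M {\<omega>\<in>space M. X2 \<omega> = 0}"
    unfolding jdf_def using assms(2,3) by (intro finite_measure_mono) force+
  then show ?thesis using assms(4) by (simp add: antisym jdf_def)
qed

lemma pos_continuous_df_jdf:
  assumes "prob_space M" "X1 \<in> borel_measurable M" "X2 \<in> borel_measurable M"
    and "\<forall>\<omega>\<in>space M. 0 \<le> X1 \<omega> \<and> 0 \<le> X2 \<omega>"
    and "absolutely_continuous lborel (distr M lborel (\<lambda>\<omega>. (X1 \<omega>, X2 \<omega>)))"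
  shows "pos_continuous_df (jdf M X1 X2)"
proof -
  note atomless = measure_component_eq_0_of_absolutely_continuous[OF assms(5,2,3)]
  have "jdf M X1 X2 x 0 = 0" "jdf M X2 X1 x 0 = 0" for x
    using assms(1-4) atomless by (auto intro!: jdf_at_0)
  moreover have "continuous_on UNIV (jdf M X1 X2 x)" "continuous_on UNIV (jdf M X2 X1 x)" for x
    using assms(1-3) atomless by (auto intro!: continuous_at_imp_continuous_on isCont_jdf)
  ultimately show ?thesis
    using jdf_monotone_df[OF assms(1-3)] jdf_swap[of M X2 X1]
    by (simp add: pos_continuous_df_def)
qed

lemma cdcpe_jdf_affine:
  assumes "prob_space M" "X1 \<in> borel_measurable M" "X2 \<in> borel_measurable M"
    and "\<forall>\<omega>\<in>space M. 0 \<le> X1 \<omega> \<and> 0 \<le> X2 \<omega>"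
    and "0 < a1" "0 < a2" "0 \<le> c1" "c1 \<le> t1" "0 \<le> c2" "c2 \<le> t2"
  shows "cdcpe1 (jdf M (\<lambda>\<omega>. a1 * X1 \<omega> + c1) (\<lambda>\<omega>. a2 * X2 \<omega> + c2)) t1 t2
       = a1 * cdcpe1 (jdf M X1 X2) ((t1 - c1) / a1) ((t2 - c2) / a2)" (is ?first)
    and "cdcpe2 (jdf M (\<lambda>\<omega>. a1 * X1 \<omega> + c1) (\<lambda>\<omega>. a2 * X2 \<omega> + c2)) t1 t2
       = a2 * cdcpe2 (jdf M X1 X2) ((t1 - c1) / a1) ((t2 - c2) / a2)" (is ?second)
proof -
  note F = monotone_dfD[OF jdf_monotone_df[OF assms(1-3)]]
  show ?first ?second
    unfolding cdcpe1_eq_cpe cdcpe2_eq_cpe jdf_affine[OF assms(5,6)]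
    using assms(5-10) F jdf_eq_0_of_neg[OF assms(4)] by (auto intro!: cpe_affine)
qed

theorem theorem3p8:
  fixes M :: "'a measure" and N :: "'b measure"
    and X1 X2 :: "'a \<Rightarrow> real" and X1' X2' :: "'b \<Rightarrow> real"
    and a1 a2 c1 c2 d1 d2 :: real
  assumes "prob_space M" and "prob_space N"
    and "X1 \<in> borel_measurable M" "X2 \<in> borel_measurable M"
    and "X1' \<in> borel_measurable N" "X2' \<in> borel_measurable N"
    and "\<forall>\<omega>\<in>space M. X1 \<omega> \<ge> 0 \<and> X2 \<omega> \<ge> 0"
    and "\<forall>\<omega>\<in>space N. X1' \<omega> \<ge> 0 \<and> X2' \<omega> \<ge> 0"
    and "absolutely_continuous lborel (distr M lborel (\<lambda>\<omega>. (X1 \<omega>, X2 \<omega>)))"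
    and "absolutely_continuous lborel (distr N lborel (\<lambda>\<omega>. (X1' \<omega>, X2' \<omega>)))"
    and "a1 > 0" "a2 > 0" "c1 > 0" "c2 > 0" "d1 \<ge> c1" "d2 \<ge> c2"
    and "cdcpe_le (jdf M X1 X2) (jdf N X1' X2')"
    and "cdcpe_increasing (jdf M X1 X2) \<or> cdcpe_increasing (jdf N X1' X2')"
  shows "\<forall>t1 t2. t1 \<ge> d1 \<longrightarrow> t2 \<ge> d2 \<longrightarrow>
      cdcpe_defined (jdf M (\<lambda>\<omega>. a1 * X1 \<omega> + c1) (\<lambda>\<omega>. a2 * X2 \<omega> + c2)) t1 t2 \<longrightarrow>
      cdcpe_defined (jdf N (\<lambda>\<omega>. a1 * X1' \<omega> + d1) (\<lambda>\<omega>. a2 * X2' \<omega> + d2)) t1 t2 \<longrightarrow>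
      cdcpe1 (jdf N (\<lambda>\<omega>. a1 * X1' \<omega> + d1) (\<lambda>\<omega>. a2 * X2' \<omega> + d2)) t1 t2
        \<le> cdcpe1 (jdf M (\<lambda>\<omega>. a1 * X1 \<omega> + c1) (\<lambda>\<omega>. a2 * X2 \<omega> + c2)) t1 t2 \<and>
      cdcpe2 (jdf N (\<lambda>\<omega>. a1 * X1' \<omega> + d1) (\<lambda>\<omega>. a2 * X2' \<omega> + d2)) t1 t2
        \<le> cdcpe2 (jdf M (\<lambda>\<omega>. a1 * X1 \<omega> + c1) (\<lambda>\<omega>. a2 * X2 \<omega> + c2)) t1 t2"
proof (intro allI impI)
  let ?G = "jdf M (\<lambda>\<omega>. a1 * X1 \<omega> + c1) (\<lambda>\<omega>. a2 * X2 \<omega> + c2)"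
    and ?G' = "jdf N (\<lambda>\<omega>. a1 * X1' \<omega> + d1) (\<lambda>\<omega>. a2 * X2' \<omega> + d2)"
  fix t1 t2
  assume t: "d1 \<le> t1" "d2 \<le> t2" and "cdcpe_defined ?G t1 t2" "cdcpe_defined ?G' t1 t2"
  then have pos: "0 < jdf M X1 X2 ((t1 - c1) / a1) ((t2 - c2) / a2)"
      "0 < jdf N X1' X2' ((t1 - d1) / a1) ((t2 - d2) / a2)"
    by (simp_all add: cdcpe_defined_def jdf_affine assms(11,12))
  have "cdcpe1 (jdf N X1' X2') ((t1 - d1) / a1) ((t2 - d2) / a2)
          \<le> cdcpe1 (jdf M X1 X2) ((t1 - c1) / a1) ((t2 - c2) / a2) \<and>
        cdcpe2 (jdf N X1' X2') ((t1 - d1) / a1) ((t2 - d2) / a2)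
          \<le> cdcpe2 (jdf M X1 X2) ((t1 - c1) / a1) ((t2 - c2) / a2)"
    using jdf_monotone_df[OF assms(1,3,4)] pos_continuous_df_jdf[OF assms(2,5,6,8,10)]
      assms(17,18) pos t assms(11-16)
    by (intro cdcpe_le_at_dominated_points) (auto intro: divide_right_mono)
  moreover note cdcpe_jdf_affine[OF assms(1,3,4,7,11,12), of c1 t1 c2 t2]
    cdcpe_jdf_affine[OF assms(2,5,6,8,11,12), of d1 t1 d2 t2]
  ultimately show "cdcpe1 ?G' t1 t2 \<le> cdcpe1 ?G t1 t2 \<and> cdcpe2 ?G' t1 t2 \<le> cdcpe2 ?G t1 t2"
    using t assms(11-16) by (auto intro: mult_left_mono)
qed

end
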